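(* For $D\to\infty$, and any distinct primes $p,q$, $$S_1(D)=\frac{\pi^4D^4}{2^3\cdot3^2\cdot5}+O(D^3),\quad S_p(D)=\frac{\pi^4D^4}{2^3\cdot3^2\cdot5}\cdot\frac{p+1}{p^2+p+1}+O(D^3),$$ $$S_{pq}(D)=\frac{\pi^4D^4}{2^3\cdot3^2\cdot5}\cdot\frac{p+1}{p^2+p+1}\cdot\frac{q+1}{q^2+q+1}+O(D^3).$$
   Context: For a positive integer $k$, $S_k(D)=\sum_{d=1}^D\sum_{m\mid d,\ k\mid m}\sigma(d/m)\,\mathbf a(m)$, where $\sigma(n)$ is the sum of positive divisors of $n$ and $\mathbf a(m)=|\mathrm{SL}_2(\mathbb Z/m\mathbb Z)|=m\sum_{t\mid m}\mu(m/t)t^2$ ($\mu$ the Möbius function). *)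

theory Defs
  imports "HOL-Analysis.Analysis" "HOL-Library.Landau_Symbols"
begin

definition moebius_mu :: "nat \<Rightarrow> int" where
  "moebius_mu n = (if n = 0 then 0
     else if (\<forall>p. prime p \<longrightarrow> \<not> p^2 dvd n) then (-1) ^ card (prime_factors n) else 0)"

definition sigma1 :: "nat \<Rightarrow> nat" where
  "sigma1 n = (\<Sum>d | d dvd n. d)"

text \<open>a(m) = |SL_2(Z/mZ)| = m * sum_{t | m} mu(m/t) t^2\<close>
definition aSL2 :: "nat \<Rightarrow> int" where
  "aSL2 m = int m * (\<Sum>t | t dvd m. moebius_mu (m div t) * int t ^ 2)"

definition S :: "nat \<Rightarrow> nat \<Rightarrow> int" where
  "S k D = (\<Sum>d\<in>{1..D}. \<Sum>m | m dvd d \<and> k dvd m. int (sigma1 (d div m)) * aSL2 m)"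

end

theory Submission
  imports Defs
begin

(*
  Since a(m) = m J(m) with Jordan's totient J(m) = sum_{t | m} mu(m/t) t^2, exchanging the order
  of summation gives S_k(D) = sum_{e <= D} f_k(e) floor(D/e) with f_k(e) = e sum_{m | e, k | m} J(m).
  As sum_{m | e} J(m) = e^2, f_1(e) = e^3, and by inclusion-exclusion f_p and f_pq are combinations
  of e^3 and of weights that only see the part of e prime to p (and q). Writing e = p^a t with
  p not dividing t expresses the floor sums of those weights through the floor sum of e^3 taken at
  D / p^a. The floor sum of e^3 is sum_w sum_{t <= D/w} t^3 = zeta(4) D^4 / 4 + O(D^3), where
  zeta(4) = pi^4 / 90 is read off the sine product in the way the library solves the Basel problem.
  Summing the resulting geometric series over a, each prime p multiplies the main term by
  (p + 1) / (p^2 + p + 1) and keeps the error O(D^3).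
*)

section \<open>Divisor sums and Jordan's totient\<close>

lemma moebius_mu_eq_0_if_prime_square_dvd:
  assumes "prime p" "p^2 dvd n"
  shows "moebius_mu n = 0"
  using assms unfolding moebius_mu_def by auto

lemma moebius_mu_1 [simp]: "moebius_mu 1 = 1" "moebius_mu (Suc 0) = 1"
  unfolding moebius_mu_def by auto

lemma moebius_mu_prime_mult:
  assumes p: "prime p" and s: "s > 0" and "\<not> p dvd s"
  shows "moebius_mu (p * s) = - moebius_mu s"
proof -
  have squarefree_iff: "(\<forall>r. prime r \<longrightarrow> \<not> r^2 dvd p * s) \<longleftrightarrow> (\<forall>r. prime r \<longrightarrow> \<not> r^2 dvd s)"
  proof (intro iffI allI impI)
    fix r :: nat assume "\<forall>r. prime r \<longrightarrow> \<not> r^2 dvd p * s" "prime r"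
    then show "\<not> r^2 dvd s" using dvd_mult by blast
  next
    fix r :: nat assume H: "\<forall>r. prime r \<longrightarrow> \<not> r^2 dvd s" and r: "prime r"
    show "\<not> r^2 dvd p * s"
    proof (cases "r = p")
      case True
      with p \<open>\<not> p dvd s\<close> show ?thesis by (auto simp: power2_eq_square prime_gt_0_nat)
    next
      case False
      then have "coprime (r^2) p" using r p by (simp add: primes_coprime)
      then show ?thesis using H r by (metis coprime_dvd_mult_right_iff)
    qed
  qed
  have "prime_factors (p * s) = insert p (prime_factors s)"
    using prime_factors_product[of p s] p s by (auto simp: prime_prime_factors)
  moreover have "p \<notin> prime_factors s"
    using \<open>\<not> p dvd s\<close> by auto
  ultimately have "card (prime_factors (p * s)) = Suc (card (prime_factors s))"
    by simp
  then show ?thesis using p s squarefree_iff unfolding moebius_mu_def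
    by (auto simp: prime_gt_0_nat)
qed

lemma sum_moebius_mu_divisors:
  assumes n: "n > 0"
  shows "(\<Sum>d | d dvd n. moebius_mu d) = (if n = 1 then 1 else 0)"
proof (cases "n = 1")
  case False
  then obtain p where p: "prime p" "p dvd n" using prime_factor_nat by blast
  define A0 where "A0 = {d. d dvd n \<and> \<not> p dvd d}"
  define A1 where "A1 = {d. d dvd n \<and> p dvd d \<and> \<not> p^2 dvd d}"
  define A2 where "A2 = {d. d dvd n \<and> p^2 dvd d}"
  have fin: "finite A0" "finite A1" "finite A2"
    using n unfolding A0_def A1_def A2_def by auto
  have divisors_split: "{d. d dvd n} = A0 \<union> (A1 \<union> A2)"
    unfolding A0_def A1_def A2_def by auto
  have "A0 \<inter> (A1 \<union> A2) = {}" "A1 \<inter> A2 = {}"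
    unfolding A0_def A1_def A2_def by (auto simp: power2_eq_square dest: dvd_mult_left)
  then have sum_split: "(\<Sum>d | d dvd n. moebius_mu d)
      = (\<Sum>d\<in>A0. moebius_mu d) + (\<Sum>d\<in>A1. moebius_mu d) + (\<Sum>d\<in>A2. moebius_mu d)"
    unfolding divisors_split using fin by (simp add: sum.union_disjoint)
  have sum_A2: "(\<Sum>d\<in>A2. moebius_mu d) = 0"
    using moebius_mu_eq_0_if_prime_square_dvd[OF p(1)] unfolding A2_def by simp
  have "A1 = (\<lambda>s. p * s) ` A0"
  proof (intro equalityI subsetI)
    fix d assume d: "d \<in> A1"
    then obtain s where s: "d = p * s" unfolding A1_def by auto
    with d show "d \<in> (\<lambda>s. p * s) ` A0"
      unfolding A1_def A0_def by (auto intro: dvd_mult_right simp: power2_eq_square)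
  next
    fix d assume "d \<in> (\<lambda>s. p * s) ` A0"
    then obtain s where s: "d = p * s" "s dvd n" "\<not> p dvd s" unfolding A0_def by auto
    then have "p * s dvd n"
      using p by (simp add: divides_mult prime_imp_coprime)
    then show "d \<in> A1"
      using s p(1) unfolding A1_def by (simp add: power2_eq_square prime_gt_0_nat)
  qed
  then have "(\<Sum>d\<in>A1. moebius_mu d) = (\<Sum>s\<in>A0. moebius_mu (p * s))"
    using p(1) by (simp add: sum.reindex inj_on_def prime_gt_0_nat)
  also have "\<dots> = - (\<Sum>s\<in>A0. moebius_mu s)"
    using n p(1) unfolding A0_def
    by (auto simp: sum_negf[symmetric] moebius_mu_prime_mult intro!: sum.cong Nat.gr0I)
  finally show ?thesis using False sum_split sum_A2 by simp
qed simp

lemma sum_divisors_of_quotients: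
  fixes H :: "nat \<Rightarrow> nat \<Rightarrow> 'a::comm_monoid_add"
  assumes n: "n > 0"
  shows "(\<Sum>m | m dvd n. \<Sum>v | v dvd n div m. H m v) = (\<Sum>e | e dvd n. \<Sum>m | m dvd e. H m (e div m))"
proof -
  have "(\<Sum>m | m dvd n. \<Sum>v | v dvd n div m. H m v) = (\<Sum>(m, v)\<in>(SIGMA m:{m. m dvd n}. {v. v dvd n div m}). H m v)"
    using n by (subst sum.Sigma) (auto simp: dvd_div_eq_0_iff)
  also have "\<dots> = (\<Sum>(e, m)\<in>(SIGMA e:{e. e dvd n}. {m. m dvd e}). H m (e div m))"
  proof (rule sum.reindex_bij_witness[where i = "\<lambda>(e, m). (m, e div m)" and j = "\<lambda>(m, v). (m * v, m)"])
    fix a assume "a \<in> (SIGMA e:{e. e dvd n}. {m. m dvd e})"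
    then show "(case (case a of (e, m) \<Rightarrow> (m, e div m)) of (m, v) \<Rightarrow> (m * v, m)) = a"
      and "(case a of (e, m) \<Rightarrow> (m, e div m)) \<in> (SIGMA m:{m. m dvd n}. {v. v dvd n div m})"
      using n by (auto intro: dvd_trans)
  next
    fix b assume b: "b \<in> (SIGMA m:{m. m dvd n}. {v. v dvd n div m})"
    then obtain m v where mv: "b = (m, v)" "m dvd n" "v dvd n div m" by auto
    then have "m > 0" using n by (auto intro: Nat.gr0I)
    moreover have "m * v dvd n"
      using mv by (metis dvd_mult_div_cancel mult_dvd_mono dvd_refl)
    ultimately show "(case (case b of (m, v) \<Rightarrow> (m * v, m)) of (e, m) \<Rightarrow> (m, e div m)) = b"
      and "(case b of (m, v) \<Rightarrow> (m * v, m)) \<in> (SIGMA e:{e. e dvd n}. {m. m dvd e})"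
      and "(case (case b of (m, v) \<Rightarrow> (m * v, m)) of (e, m) \<Rightarrow> H m (e div m)) = (case b of (m, v) \<Rightarrow> H m v)"
      using mv by auto
  qed
  also have "\<dots> = (\<Sum>e | e dvd n. \<Sum>m | m dvd e. H m (e div m))"
    using n by (subst sum.Sigma) (auto dest: dvd_pos_nat)
  finally show ?thesis .
qed

lemma sum_divisors_filter:
  fixes n :: nat
  assumes "n > 0"
  shows "(\<Sum>m | m dvd n \<and> P m. f m) = (\<Sum>m | m dvd n. if P m then f m else 0)"
proof -
  have "{m. m dvd n \<and> P m} = {m \<in> {m. m dvd n}. P m}" by auto
  moreover have "finite {m. m dvd n}" using assms by simp
  ultimately show ?thesis by (simp only: sum.inter_filter)
qed

definition jordan2 :: "nat \<Rightarrow> int" where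
  "jordan2 m = (\<Sum>t | t dvd m. moebius_mu (m div t) * int t ^ 2)"

lemma aSL2_eq_jordan2: "aSL2 m = int m * jordan2 m"
  unfolding aSL2_def jordan2_def ..

lemma sum_jordan2_divisors:
  assumes n: "n > 0"
  shows "(\<Sum>m | m dvd n. jordan2 m) = int n ^ 2"
proof -
  have "(\<Sum>m | m dvd n. jordan2 m) = (\<Sum>t | t dvd n. \<Sum>s | s dvd n div t. moebius_mu s * int t ^ 2)"
    unfolding jordan2_def using sum_divisors_of_quotients[OF n, of "\<lambda>t s. moebius_mu s * int t ^ 2"] by simp
  also have "\<dots> = (\<Sum>t | t dvd n. if t = n then int n ^ 2 else 0)"
  proof (rule sum.cong[OF refl])
    fix t assume t: "t \<in> {t. t dvd n}"
    then have "n div t > 0" using n by (auto simp: dvd_div_eq_0_iff intro: Nat.gr0I)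
    then have "(\<Sum>s | s dvd n div t. moebius_mu s * int t ^ 2) = (if n div t = 1 then int t ^ 2 else 0)"
      by (simp add: sum_distrib_right[symmetric] sum_moebius_mu_divisors)
    also have "\<dots> = (if t = n then int n ^ 2 else 0)"
      using t n by auto
    finally show "(\<Sum>s | s dvd n div t. moebius_mu s * int t ^ 2) = (if t = n then int n ^ 2 else 0)" .
  qed
  also have "\<dots> = int n ^ 2" using n by simp
  finally show ?thesis .
qed

lemma sum_sigma1_times_divisor_sum:
  fixes g :: "nat \<Rightarrow> int"
  assumes d: "d > 0"
  shows "(\<Sum>m | m dvd d. int (sigma1 (d div m)) * (int m * g m)) = (\<Sum>e | e dvd d. int e * (\<Sum>m | m dvd e. g m))"
proof -
  have "(\<Sum>m | m dvd d. int (sigma1 (d div m)) * (int m * g m)) = (\<Sum>m | m dvd d. \<Sum>v | v dvd d div m. int (m * v) * g m)"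
    unfolding sigma1_def of_nat_sum sum_distrib_right by (simp add: mult_ac)
  also have "\<dots> = (\<Sum>e | e dvd d. \<Sum>m | m dvd e. int (m * (e div m)) * g m)"
    by (rule sum_divisors_of_quotients[OF d])
  also have "\<dots> = (\<Sum>e | e dvd d. int e * (\<Sum>m | m dvd e. g m))"
    by (simp add: sum_distrib_left)
  finally show ?thesis .
qed

lemma sum_upto_divisor_sums:
  fixes F :: "nat \<Rightarrow> 'a::comm_semiring_1"
  shows "(\<Sum>d\<in>{1..D}. \<Sum>e | e dvd d. F e) = (\<Sum>e\<in>{1..D}. F e * of_nat (D div e))"
proof (induction D)
  case (Suc D)
  have "(\<Sum>e\<in>{1..Suc D}. F e * of_nat (Suc D div e))
      = (\<Sum>e\<in>{1..Suc D}. F e * of_nat (D div e)) + (\<Sum>e\<in>{1..Suc D}. if e dvd Suc D then F e else 0)"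
    by (subst sum.distrib[symmetric], rule sum.cong) (auto simp: div_Suc dvd_eq_mod_eq_0 algebra_simps)
  also have "(\<Sum>e\<in>{1..Suc D}. F e * of_nat (D div e)) = (\<Sum>e\<in>{1..D}. F e * of_nat (D div e))"
    by simp
  also have "(\<Sum>e\<in>{1..Suc D}. if e dvd Suc D then F e else 0) = (\<Sum>e | e dvd Suc D. F e)"
  proof -
    have "(\<Sum>e\<in>{1..Suc D}. if e dvd Suc D then F e else 0) = (\<Sum>e\<in>{e\<in>{1..Suc D}. e dvd Suc D}. F e)"
      by (rule sum.inter_filter[symmetric]) simp
    also have "{e\<in>{1..Suc D}. e dvd Suc D} = {e. e dvd Suc D}"
      by (auto intro: dvd_imp_le Suc_leI dvd_pos_nat)
    finally show ?thesis .
  qed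
  finally show ?case using Suc by simp
qed simp

definition floor_sum :: "(nat \<Rightarrow> real) \<Rightarrow> nat \<Rightarrow> real" where
  "floor_sum f D = (\<Sum>e\<in>{1..D}. f e * real (D div e))"

definition jordan2_weight :: "(nat \<Rightarrow> bool) \<Rightarrow> nat \<Rightarrow> real" where
  "jordan2_weight P e = real e * real_of_int (\<Sum>m | m dvd e \<and> P m. jordan2 m)"

lemma S_eq_floor_sum: "real_of_int (S k D) = floor_sum (jordan2_weight ((dvd) k)) D"
proof -
  have "S k D = (\<Sum>d\<in>{1..D}. \<Sum>e | e dvd d. int e * (\<Sum>m | m dvd e \<and> k dvd m. jordan2 m))"
    unfolding S_def
  proof (rule sum.cong[OF refl])
    fix d assume "d \<in> {1..D}"
    then have d: "d > 0" by simp
    have "(\<Sum>m | m dvd d \<and> k dvd m. int (sigma1 (d div m)) * aSL2 m)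
        = (\<Sum>m | m dvd d. int (sigma1 (d div m)) * (int m * (if k dvd m then jordan2 m else 0)))"
      using d by (subst sum_divisors_filter) (auto simp: aSL2_eq_jordan2 intro!: sum.cong)
    also have "\<dots> = (\<Sum>e | e dvd d. int e * (\<Sum>m | m dvd e \<and> k dvd m. jordan2 m))"
      using d by (simp add: sum_sigma1_times_divisor_sum sum_divisors_filter dvd_pos_nat)
    finally show "(\<Sum>m | m dvd d \<and> k dvd m. int (sigma1 (d div m)) * aSL2 m)
        = (\<Sum>e | e dvd d. int e * (\<Sum>m | m dvd e \<and> k dvd m. jordan2 m))" .
  qed
  also have "\<dots> = (\<Sum>e\<in>{1..D}. int e * (\<Sum>m | m dvd e \<and> k dvd m. jordan2 m) * int (D div e))"
    by (rule sum_upto_divisor_sums)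
  finally show ?thesis unfolding floor_sum_def jordan2_weight_def by simp
qed

lemma jordan2_weight_True: "jordan2_weight (\<lambda>_. True) = (\<lambda>e. real e ^ 3)"
proof
  fix e
  show "jordan2_weight (\<lambda>_. True) e = real e ^ 3"
    using sum_jordan2_divisors[of e] unfolding jordan2_weight_def
    by (cases "e = 0") (simp_all add: power3_eq_cube power2_eq_square)
qed

lemma jordan2_weight_eq_sum_if:
  "jordan2_weight P e = real e * real_of_int (\<Sum>m | m dvd e. if P m then jordan2 m else 0)"
  unfolding jordan2_weight_def by (cases "e = 0") (simp_all add: sum_divisors_filter)

lemma jordan2_weight_compl:
  "jordan2_weight P = (\<lambda>e. real e ^ 3 - jordan2_weight (\<lambda>m. \<not> P m) e)"
proof
  fix e
  have cube_eq: "real e ^ 3 = jordan2_weight (\<lambda>_. True) e"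
    by (simp add: jordan2_weight_True)
  have "(\<Sum>m | m dvd e. if P m then jordan2 m else 0)
      = (\<Sum>m | m dvd e. jordan2 m - (if \<not> P m then jordan2 m else 0))"
    by (rule sum.cong) simp_all
  also have "\<dots> = (\<Sum>m | m dvd e. if True then jordan2 m else 0) - (\<Sum>m | m dvd e. if \<not> P m then jordan2 m else 0)"
    by (simp add: sum_subtractf)
  finally show "jordan2_weight P e = real e ^ 3 - jordan2_weight (\<lambda>m. \<not> P m) e"
    unfolding jordan2_weight_eq_sum_if[of _ e] cube_eq by (simp add: right_diff_distrib)
qed

lemma jordan2_weight_conj:
  "jordan2_weight (\<lambda>m. P m \<and> Q m) = (\<lambda>e. real e ^ 3 - jordan2_weight (\<lambda>m. \<not> P m) e
     - jordan2_weight (\<lambda>m. \<not> Q m) e + jordan2_weight (\<lambda>m. \<not> P m \<and> \<not> Q m) e)"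
proof
  fix e
  have cube_eq: "real e ^ 3 = jordan2_weight (\<lambda>_. True) e"
    by (simp add: jordan2_weight_True)
  have "(\<Sum>m | m dvd e. if P m \<and> Q m then jordan2 m else 0)
      = (\<Sum>m | m dvd e. jordan2 m - (if \<not> P m then jordan2 m else 0)
          - (if \<not> Q m then jordan2 m else 0) + (if \<not> P m \<and> \<not> Q m then jordan2 m else 0))"
    by (rule sum.cong) simp_all
  also have "\<dots> = (\<Sum>m | m dvd e. if True then jordan2 m else 0) - (\<Sum>m | m dvd e. if \<not> P m then jordan2 m else 0)
      - (\<Sum>m | m dvd e. if \<not> Q m then jordan2 m else 0) + (\<Sum>m | m dvd e. if \<not> P m \<and> \<not> Q m then jordan2 m else 0)"
    by (simp add: sum_subtractf sum.distrib)
  finally have sum_eq: "(\<Sum>m | m dvd e. if P m \<and> Q m then jordan2 m else 0) = \<dots>" .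
  show "jordan2_weight (\<lambda>m. P m \<and> Q m) e = real e ^ 3 - jordan2_weight (\<lambda>m. \<not> P m) e
     - jordan2_weight (\<lambda>m. \<not> Q m) e + jordan2_weight (\<lambda>m. \<not> P m \<and> \<not> Q m) e"
    unfolding jordan2_weight_eq_sum_if[of _ e] cube_eq sum_eq by (simp add: algebra_simps)
qed

lemma floor_sum_add: "floor_sum (\<lambda>e. f e + g e) D = floor_sum f D + floor_sum g D"
  unfolding floor_sum_def by (simp add: sum.distrib algebra_simps)

lemma floor_sum_diff: "floor_sum (\<lambda>e. f e - g e) D = floor_sum f D - floor_sum g D"
  unfolding floor_sum_def by (simp add: sum_subtractf algebra_simps)

section \<open>Splitting off the powers of a prime\<close>

lemma sum_upto_by_multiplicity:
  assumes p: "prime p"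
  shows "(\<Sum>e\<in>{1..D}. h e) = (\<Sum>a<D. \<Sum>t | t \<in> {1..D div p ^ a} \<and> \<not> p dvd t. h (p ^ a * t))"
proof -
  have p1: "Suc 0 < p" using p prime_gt_1_nat by simp
  have "(\<Sum>e\<in>{1..D}. h e) = (\<Sum>(a, t)\<in>(SIGMA a:{..<D}. {t. t \<in> {1..D div p ^ a} \<and> \<not> p dvd t}). h (p ^ a * t))"
  proof (rule sum.reindex_bij_witness[where i = "\<lambda>(a, t). p ^ a * t"
        and j = "\<lambda>e. (multiplicity p e, e div p ^ multiplicity p e)"])
    fix e assume e: "e \<in> {1..D}"
    define a where "a = multiplicity p e"
    have dvd: "p ^ a dvd e" unfolding a_def by (rule multiplicity_dvd)
    then show "(case (multiplicity p e, e div p ^ multiplicity p e) of (a, t) \<Rightarrow> p ^ a * t) = e"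
      and "(case (multiplicity p e, e div p ^ multiplicity p e) of (a, t) \<Rightarrow> h (p ^ a * t)) = h e"
      unfolding a_def by simp_all
    have "\<not> p dvd e div p ^ a"
      unfolding a_def using e p by (intro multiplicity_decompose) (auto simp: not_prime_unit)
    moreover have "a < D"
      using e p1 dvd_imp_le[OF dvd] power_gt_expt[OF p1, of a] by simp
    moreover have "e div p ^ a \<ge> 1" and "e div p ^ a \<le> D div p ^ a"
      using dvd e by (auto simp: div_le_mono dvd_div_eq_0_iff Suc_le_eq intro: Nat.gr0I)
    ultimately show "(multiplicity p e, e div p ^ multiplicity p e)
        \<in> (SIGMA a:{..<D}. {t. t \<in> {1..D div p ^ a} \<and> \<not> p dvd t})"
      unfolding a_def by simp
  next
    fix x assume "x \<in> (SIGMA a:{..<D}. {t. t \<in> {1..D div p ^ a} \<and> \<not> p dvd t})"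
    then obtain a t where x: "x = (a, t)" and t: "1 \<le> t" "t \<le> D div p ^ a" "\<not> p dvd t"
      by auto
    have "multiplicity p (p ^ a * t) = a"
      using p t by (simp add: prime_elem_multiplicity_mult_distrib not_dvd_imp_multiplicity_0)
    then show "(multiplicity p (case x of (a, t) \<Rightarrow> p ^ a * t),
        (case x of (a, t) \<Rightarrow> p ^ a * t) div p ^ multiplicity p (case x of (a, t) \<Rightarrow> p ^ a * t)) = x"
      using x p1 by simp
    have "p ^ a * t \<le> D"
      using t(2) p1 by (simp add: less_eq_div_iff_mult_less_eq mult.commute)
    then show "(case x of (a, t) \<Rightarrow> p ^ a * t) \<in> {1..D}"
      using x t(1) p1 by simp
  qed
  also have "\<dots> = (\<Sum>a<D. \<Sum>t | t \<in> {1..D div p ^ a} \<and> \<not> p dvd t. h (p ^ a * t))"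
    by (subst sum.Sigma) auto
  finally show ?thesis .
qed

lemma floor_sum_coprime_part:
  assumes p: "p > 0" and g: "\<And>s. s > 0 \<Longrightarrow> g (p * s) = real p ^ 3 * g s"
  shows "(\<Sum>t | t \<in> {1..y} \<and> \<not> p dvd t. g t * real (y div t)) = floor_sum g y - real p ^ 3 * floor_sum g (y div p)"
proof -
  have "floor_sum g y = (\<Sum>t | t \<in> {1..y} \<and> \<not> p dvd t. g t * real (y div t))
      + (\<Sum>t | t \<in> {1..y} \<and> p dvd t. g t * real (y div t))"
    unfolding floor_sum_def by (subst sum.union_disjoint[symmetric]) (auto intro: sum.cong)
  moreover have "{t. t \<in> {1..y} \<and> p dvd t} = (\<lambda>s. p * s) ` {1..y div p}"
  proof (intro equalityI subsetI)
    fix t assume "t \<in> {t. t \<in> {1..y} \<and> p dvd t}"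
    then show "t \<in> (\<lambda>s. p * s) ` {1..y div p}"
      using p by (auto simp: less_eq_div_iff_mult_less_eq mult.commute intro: Nat.gr0I)
  qed (use p in \<open>auto simp: less_eq_div_iff_mult_less_eq mult.commute\<close>)
  then have "(\<Sum>t | t \<in> {1..y} \<and> p dvd t. g t * real (y div t)) = (\<Sum>s\<in>{1..y div p}. g (p * s) * real (y div (p * s)))"
    using p by (simp add: sum.reindex inj_on_def)
  also have "\<dots> = real p ^ 3 * floor_sum g (y div p)"
    unfolding floor_sum_def sum_distrib_left by (rule sum.cong) (simp_all add: g div_mult2_eq)
  ultimately show ?thesis by simp
qed

definition padic_transform :: "nat \<Rightarrow> (nat \<Rightarrow> real) \<Rightarrow> nat \<Rightarrow> real" where
  "padic_transform p F D = (\<Sum>a<D. real p ^ a * (F (D div p ^ a) - real p ^ 3 * F (D div p ^ Suc a)))"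

lemma floor_sum_eq_padic_transform:
  assumes p: "prime p"
    and f: "\<And>a t. t > 0 \<Longrightarrow> \<not> p dvd t \<Longrightarrow> f (p ^ a * t) = real p ^ a * g t"
    and g: "\<And>s. s > 0 \<Longrightarrow> g (p * s) = real p ^ 3 * g s"
  shows "floor_sum f D = padic_transform p (floor_sum g) D"
proof -
  have p0: "p > 0" using p prime_gt_0_nat by blast
  have "floor_sum f D = (\<Sum>a<D. \<Sum>t | t \<in> {1..D div p ^ a} \<and> \<not> p dvd t. f (p ^ a * t) * real (D div (p ^ a * t)))"
    unfolding floor_sum_def by (rule sum_upto_by_multiplicity[OF p])
  also have "\<dots> = (\<Sum>a<D. real p ^ a * (\<Sum>t | t \<in> {1..D div p ^ a} \<and> \<not> p dvd t. g t * real (D div p ^ a div t)))"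
    by (auto simp: f div_mult2_eq sum_distrib_left intro!: sum.cong)
  also have "\<dots> = padic_transform p (floor_sum g) D"
    unfolding padic_transform_def
  proof (rule sum.cong[OF refl])
    fix a
    have "D div p ^ a div p = D div p ^ Suc a"
      by (simp only: div_mult2_eq power_Suc2)
    then show "real p ^ a * (\<Sum>t | t \<in> {1..D div p ^ a} \<and> \<not> p dvd t. g t * real (D div p ^ a div t))
        = real p ^ a * (floor_sum g (D div p ^ a) - real p ^ 3 * floor_sum g (D div p ^ Suc a))"
      using floor_sum_coprime_part[where g = g and y = "D div p ^ a", OF p0 g] by simp
  qed
  finally show ?thesis .
qed

lemma jordan2_weight_prime_power_mult:
  assumes p: "prime p" and t: "\<not> p dvd t"
  shows "jordan2_weight (\<lambda>m. \<not> p dvd m \<and> R m) (p ^ a * t) = real p ^ a * jordan2_weight R t"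
proof -
  have "m dvd p ^ a * t \<and> \<not> p dvd m \<longleftrightarrow> m dvd t" for m
  proof
    assume m: "m dvd p ^ a * t \<and> \<not> p dvd m"
    then have "coprime m p" using p by (metis prime_imp_coprime coprime_commute)
    with m show "m dvd t" by (simp add: coprime_dvd_mult_right_iff)
  next
    assume "m dvd t"
    then show "m dvd p ^ a * t \<and> \<not> p dvd m" using t dvd_trans by auto
  qed
  then have "{m. m dvd p ^ a * t \<and> \<not> p dvd m \<and> R m} = {m. m dvd t \<and> R m}"
    by blast
  then show ?thesis unfolding jordan2_weight_def by simp
qed

lemma jordan2_weight_coprime_prime_mult:
  assumes p: "prime p" and q: "prime q" and "p \<noteq> q" and s: "s > 0"
  shows "jordan2_weight (\<lambda>m. \<not> q dvd m) (p * s) = real p ^ 3 * jordan2_weight (\<lambda>m. \<not> q dvd m) s"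
proof -
  obtain b t where t: "s = q ^ b * t" "\<not> q dvd t"
    using s q by (metis multiplicity_decompose' not_prime_unit not_gr_zero)
  have "\<not> q dvd p"
    using p q \<open>p \<noteq> q\<close> primes_dvd_imp_eq by blast
  with q t(2) have "\<not> q dvd p * t"
    by (simp add: prime_dvd_mult_iff)
  have weight: "jordan2_weight (\<lambda>m. \<not> q dvd m) (q ^ b * u) = real q ^ b * real u ^ 3" if "\<not> q dvd u" for u
    using jordan2_weight_prime_power_mult[OF q that, of "\<lambda>_. True"] by (simp add: jordan2_weight_True)
  have "jordan2_weight (\<lambda>m. \<not> q dvd m) (p * s) = jordan2_weight (\<lambda>m. \<not> q dvd m) (q ^ b * (p * t))"
    by (simp add: t(1) ac_simps)
  also have "\<dots> = real p ^ 3 * (real q ^ b * real t ^ 3)"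
    using weight[OF \<open>\<not> q dvd p * t\<close>] by (simp add: power_mult_distrib)
  also have "\<dots> = real p ^ 3 * jordan2_weight (\<lambda>m. \<not> q dvd m) s"
    using weight[OF t(2)] t(1) by simp
  finally show ?thesis .
qed

lemma floor_sum_jordan2_weight_coprime:
  assumes p: "prime p"
    and R: "\<And>s. s > 0 \<Longrightarrow> jordan2_weight R (p * s) = real p ^ 3 * jordan2_weight R s"
  shows "floor_sum (jordan2_weight (\<lambda>m. \<not> p dvd m \<and> R m)) D = padic_transform p (floor_sum (jordan2_weight R)) D"
  using p jordan2_weight_prime_power_mult[OF p] R by (rule floor_sum_eq_padic_transform)

lemma floor_sum_jordan2_weight_not_dvd:
  assumes p: "prime p"
  shows "floor_sum (jordan2_weight (\<lambda>m. \<not> p dvd m)) = padic_transform p (floor_sum (\<lambda>e. real e ^ 3))"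
proof
  fix D
  have "floor_sum (jordan2_weight (\<lambda>m. \<not> p dvd m \<and> True)) D = padic_transform p (floor_sum (jordan2_weight (\<lambda>_. True))) D"
    using p by (rule floor_sum_jordan2_weight_coprime) (simp add: jordan2_weight_True power_mult_distrib)
  then show "floor_sum (jordan2_weight (\<lambda>m. \<not> p dvd m)) D = padic_transform p (floor_sum (\<lambda>e. real e ^ 3)) D"
    by (simp add: jordan2_weight_True)
qed

lemma S_one_eq: "real_of_int (S 1 D) = floor_sum (\<lambda>e. real e ^ 3) D"
proof -
  have "(dvd) (1::nat) = (\<lambda>_. True)" by (simp add: fun_eq_iff)
  then show ?thesis unfolding S_eq_floor_sum by (simp add: jordan2_weight_True)
qed

lemma S_prime_eq:
  assumes "prime p"
  shows "real_of_int (S p D) = floor_sum (\<lambda>e. real e ^ 3) D - padic_transform p (floor_sum (\<lambda>e. real e ^ 3)) D"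
  unfolding S_eq_floor_sum jordan2_weight_compl[of "(dvd) p"] floor_sum_diff
    floor_sum_jordan2_weight_not_dvd[OF assms] ..

lemma S_prime_mult_eq:
  assumes p: "prime p" and q: "prime q" and "p \<noteq> q"
  shows "real_of_int (S (p * q) D) = floor_sum (\<lambda>e. real e ^ 3) D
    - padic_transform p (floor_sum (\<lambda>e. real e ^ 3)) D - padic_transform q (floor_sum (\<lambda>e. real e ^ 3)) D
    + padic_transform p (padic_transform q (floor_sum (\<lambda>e. real e ^ 3))) D"
proof -
  have "coprime p q"
    using p q \<open>p \<noteq> q\<close> by (simp add: primes_coprime)
  then have "(dvd) (p * q) = (\<lambda>m. p dvd m \<and> q dvd m)"
    by (auto simp: fun_eq_iff intro: divides_mult dest: dvd_mult_left dvd_mult_right)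
  then have "real_of_int (S (p * q) D) = floor_sum (jordan2_weight (\<lambda>m. p dvd m \<and> q dvd m)) D"
    unfolding S_eq_floor_sum by (rule arg_cong)
  also have "\<dots> = floor_sum (\<lambda>e. real e ^ 3) D - floor_sum (jordan2_weight (\<lambda>m. \<not> p dvd m)) D
      - floor_sum (jordan2_weight (\<lambda>m. \<not> q dvd m)) D + floor_sum (jordan2_weight (\<lambda>m. \<not> p dvd m \<and> \<not> q dvd m)) D"
    unfolding jordan2_weight_conj[of "(dvd) p" "(dvd) q"] floor_sum_add floor_sum_diff ..
  also have "floor_sum (jordan2_weight (\<lambda>m. \<not> p dvd m \<and> \<not> q dvd m)) D
      = padic_transform p (floor_sum (jordan2_weight (\<lambda>m. \<not> q dvd m))) D"
    using p jordan2_weight_coprime_prime_mult[OF p q \<open>p \<noteq> q\<close>] by (rule floor_sum_jordan2_weight_coprime)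
  finally show ?thesis
    unfolding floor_sum_jordan2_weight_not_dvd[OF p] floor_sum_jordan2_weight_not_dvd[OF q] .
qed

section \<open>Main terms of order four\<close>

definition quartic_asymp :: "(nat \<Rightarrow> real) \<Rightarrow> real \<Rightarrow> bool" where
  "quartic_asymp F \<alpha> \<longleftrightarrow> (\<exists>K\<ge>0. \<forall>m. \<bar>F m - \<alpha> * real m ^ 4\<bar> \<le> K * real m ^ 3)"

lemma quartic_asymp_imp_bigo:
  assumes "quartic_asymp F \<alpha>"
  shows "(\<lambda>D. F D - \<alpha> * real D ^ 4) \<in> O(\<lambda>D. real D ^ 3)"
proof -
  obtain K where "\<And>m. \<bar>F m - \<alpha> * real m ^ 4\<bar> \<le> K * real m ^ 3"
    using assms unfolding quartic_asymp_def by blast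
  then show ?thesis
    by (intro bigoI[of _ K] always_eventually) simp
qed

lemma quartic_asymp_add:
  assumes "quartic_asymp F \<alpha>" "quartic_asymp G \<beta>"
  shows "quartic_asymp (\<lambda>m. F m + G m) (\<alpha> + \<beta>)"
proof -
  obtain K L where "K \<ge> 0" "L \<ge> 0" and K: "\<And>m. \<bar>F m - \<alpha> * real m ^ 4\<bar> \<le> K * real m ^ 3"
    and L: "\<And>m. \<bar>G m - \<beta> * real m ^ 4\<bar> \<le> L * real m ^ 3"
    using assms unfolding quartic_asymp_def by blast
  have "\<bar>(F m + G m) - (\<alpha> + \<beta>) * real m ^ 4\<bar> \<le> (K + L) * real m ^ 3" for m
    using abs_triangle_ineq[of "F m - \<alpha> * real m ^ 4" "G m - \<beta> * real m ^ 4"] K[of m] L[of m]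
    by (simp add: algebra_simps)
  then show ?thesis
    unfolding quartic_asymp_def using \<open>K \<ge> 0\<close> \<open>L \<ge> 0\<close> by (intro exI[of _ "K + L"]) auto
qed

lemma quartic_asymp_uminus:
  assumes "quartic_asymp F \<alpha>"
  shows "quartic_asymp (\<lambda>m. - F m) (- \<alpha>)"
  using assms unfolding quartic_asymp_def by (simp add: abs_minus_commute)

lemma quartic_asymp_diff:
  assumes "quartic_asymp F \<alpha>" "quartic_asymp G \<beta>"
  shows "quartic_asymp (\<lambda>m. F m - G m) (\<alpha> - \<beta>)"
  using quartic_asymp_add[OF assms(1) quartic_asymp_uminus[OF assms(2)]] by simp

lemma power_diff_le:
  fixes m y :: real
  assumes "0 \<le> m" "m \<le> y"
  shows "y ^ n - m ^ n \<le> real n * y ^ (n - 1) * (y - m)"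
proof -
  have "(\<Sum>i<n. m ^ (n - Suc i) * y ^ i) \<le> (\<Sum>i<n. y ^ (n - 1))"
  proof (rule sum_mono)
    fix i assume "i \<in> {..<n}"
    have "m ^ (n - Suc i) * y ^ i \<le> y ^ (n - Suc i) * y ^ i"
      using assms by (intro mult_right_mono power_mono) auto
    also have "\<dots> = y ^ (n - 1)"
      using \<open>i \<in> {..<n}\<close> by (simp flip: power_add)
    finally show "m ^ (n - Suc i) * y ^ i \<le> y ^ (n - 1)" .
  qed
  then have "(y - m) * (\<Sum>i<n. m ^ (n - Suc i) * y ^ i) \<le> (y - m) * (real n * y ^ (n - 1))"
    using assms by (intro mult_left_mono) auto
  then show ?thesis
    by (simp add: power_diff_sumr2 ac_simps)
qed

lemma quartic_error_at_quotient:
  assumes F: "\<And>m. \<bar>F m - \<alpha> * real m ^ 4\<bar> \<le> K * real m ^ 3"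
    and "\<alpha> \<ge> 0" "K \<ge> 0" "v > 0"
  shows "\<bar>c * F (D div v) - \<alpha> * (c / real v ^ 4) * real D ^ 4\<bar> \<le> (K + 4 * \<alpha>) * (\<bar>c\<bar> / real v ^ 3) * real D ^ 3"
proof -
  define y where "y = real D / real v"
  define m where "m = D div v"
  have "real m \<le> y" unfolding m_def y_def by (rule of_nat_div_le_of_nat)
  moreover have "y \<le> real m + 1"
  proof -
    have "D < (m + 1) * v"
      unfolding m_def using \<open>v > 0\<close> by (simp add: dividend_less_div_times)
    then have "real D < (real m + 1) * real v"
      by (metis of_nat_1 of_nat_add of_nat_less_iff of_nat_mult)
    then show ?thesis unfolding y_def using \<open>v > 0\<close> by (simp add: divide_le_eq)
  qed
  ultimately have "y ^ 4 - real m ^ 4 \<le> 4 * y ^ 3"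
    using power_diff_le[of "real m" y 4] mult_left_le[of "y - real m" "4 * y ^ 3"] by simp
  moreover have "real m ^ 4 \<le> y ^ 4" "real m ^ 3 \<le> y ^ 3"
    using \<open>real m \<le> y\<close> by (simp_all add: power_mono)
  ultimately have "\<bar>F m - \<alpha> * y ^ 4\<bar> \<le> (K + 4 * \<alpha>) * y ^ 3"
    using F[of m] \<open>\<alpha> \<ge> 0\<close> \<open>K \<ge> 0\<close> mult_left_mono[of "y ^ 4 - real m ^ 4" "4 * y ^ 3" \<alpha>]
      mult_left_mono[of "real m ^ 3" "y ^ 3" K] mult_left_mono[of "real m ^ 4" "y ^ 4" \<alpha>]
    by (simp add: abs_le_iff algebra_simps)
  then have "\<bar>c\<bar> * \<bar>F m - \<alpha> * y ^ 4\<bar> \<le> \<bar>c\<bar> * ((K + 4 * \<alpha>) * y ^ 3)"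
    by (rule mult_left_mono) simp
  then show ?thesis
    unfolding y_def m_def by (simp add: abs_mult[symmetric] power_divide algebra_simps)
qed

lemma sum_quartic_error_at_quotients:
  assumes F: "\<And>m. \<bar>F m - \<alpha> * real m ^ 4\<bar> \<le> K * real m ^ 3"
    and "\<alpha> \<ge> 0" "K \<ge> 0" "\<And>n. \<nu> n > 0"
  shows "\<bar>(\<Sum>n<D. c n * F (D div \<nu> n)) - \<alpha> * (\<Sum>n<D. c n / real (\<nu> n) ^ 4) * real D ^ 4\<bar>
    \<le> (K + 4 * \<alpha>) * (\<Sum>n<D. \<bar>c n\<bar> / real (\<nu> n) ^ 3) * real D ^ 3"
proof -
  have "\<bar>(\<Sum>n<D. c n * F (D div \<nu> n)) - \<alpha> * (\<Sum>n<D. c n / real (\<nu> n) ^ 4) * real D ^ 4\<bar>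
      \<le> (\<Sum>n<D. \<bar>c n * F (D div \<nu> n) - \<alpha> * (c n / real (\<nu> n) ^ 4) * real D ^ 4\<bar>)"
    unfolding sum_distrib_left sum_distrib_right sum_subtractf[symmetric] by (rule sum_abs)
  also have "\<dots> \<le> (\<Sum>n<D. (K + 4 * \<alpha>) * (\<bar>c n\<bar> / real (\<nu> n) ^ 3) * real D ^ 3)"
    using assms by (intro sum_mono quartic_error_at_quotient) auto
  finally show ?thesis by (simp add: sum_distrib_left sum_distrib_right mult.assoc)
qed

lemma abs_suminf_tail_le:
  fixes a b :: "nat \<Rightarrow> real"
  assumes "summable (\<lambda>n. \<bar>a n\<bar>)" "summable b" "\<And>n. n \<ge> D \<Longrightarrow> \<bar>a n\<bar> * real D \<le> b n"
  shows "\<bar>\<Sum>n. a (n + D)\<bar> * real D \<le> (\<Sum>n. b (n + D))"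
proof -
  have summable_tail: "summable (\<lambda>n. \<bar>a (n + D)\<bar>)"
    using assms(1) by (rule summable_ignore_initial_segment)
  have "\<bar>\<Sum>n. a (n + D)\<bar> * real D \<le> (\<Sum>n. \<bar>a (n + D)\<bar>) * real D"
    using summable_rabs[OF summable_tail] by (simp add: mult_right_mono)
  also have "\<dots> = (\<Sum>n. \<bar>a (n + D)\<bar> * real D)"
    using summable_tail by (rule suminf_mult2)
  also have "\<dots> \<le> (\<Sum>n. b (n + D))"
    using assms by (intro suminf_le summable_mult2 summable_ignore_initial_segment) auto
  finally show ?thesis .
qed

(* The hypothesis nu n > n makes the terms with n >= D, which the finite sum omits, small:
   their weights c n / nu n ^ 4 are then at most |c n| / (nu n ^ 3 * D). *)

lemma weighted_sum_quartic_error: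
  fixes c :: "nat \<Rightarrow> real" and \<nu> :: "nat \<Rightarrow> nat"
  assumes F: "\<And>m. \<bar>F m - \<alpha> * real m ^ 4\<bar> \<le> K * real m ^ 3" and "\<alpha> \<ge> 0" "K \<ge> 0"
    and \<nu>: "\<And>n. \<nu> n > n"
    and summable: "summable (\<lambda>n. \<bar>c n\<bar> / real (\<nu> n) ^ 3)"
  shows "\<bar>(\<Sum>n<D. c n * F (D div \<nu> n)) - \<alpha> * (\<Sum>n. c n / real (\<nu> n) ^ 4) * real D ^ 4\<bar>
    \<le> (K + 5 * \<alpha>) * (\<Sum>n. \<bar>c n\<bar> / real (\<nu> n) ^ 3) * real D ^ 3"
proof -
  define a where "a n = c n / real (\<nu> n) ^ 4" for n
  define b where "b n = \<bar>c n\<bar> / real (\<nu> n) ^ 3" for n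
  have b_nonneg: "b n \<ge> 0" for n unfolding b_def by simp
  have a_le_b: "\<bar>a n\<bar> * real D' \<le> b n" if "D' \<le> \<nu> n" for n D'
  proof -
    have "\<bar>a n\<bar> * real D' \<le> \<bar>c n\<bar> * real (\<nu> n) / real (\<nu> n) ^ 4"
      unfolding a_def using that by (simp add: divide_right_mono mult_left_mono)
    also have "\<dots> = b n"
      unfolding b_def using \<nu>[of n] by (simp add: power_eq_if)
    finally show ?thesis .
  qed
  have "summable b" using summable unfolding b_def .
  have "summable (\<lambda>n. \<bar>a n\<bar>)"
  proof (rule summable_comparison_test[OF _ \<open>summable b\<close>])
    have "\<bar>a n\<bar> \<le> b n" for n
      using a_le_b[of 1 n] \<nu>[of n] by simp
    then show "\<exists>N. \<forall>n\<ge>N. norm \<bar>a n\<bar> \<le> b n" by simp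
  qed
  then have "summable a" by (rule summable_rabs_cancel)
  have "\<nu> n > 0" for n
    using \<nu>[of n] by simp
  then have "\<bar>(\<Sum>n<D. c n * F (D div \<nu> n)) - \<alpha> * (\<Sum>n<D. a n) * real D ^ 4\<bar> \<le> (K + 4 * \<alpha>) * (\<Sum>n<D. b n) * real D ^ 3"
    unfolding a_def b_def by (rule sum_quartic_error_at_quotients[OF F \<open>\<alpha> \<ge> 0\<close> \<open>K \<ge> 0\<close>])
  also have "\<dots> \<le> (K + 4 * \<alpha>) * (\<Sum>n. b n) * real D ^ 3"
    using sum_le_suminf[OF \<open>summable b\<close>, of "{..<D}"] b_nonneg \<open>\<alpha> \<ge> 0\<close> \<open>K \<ge> 0\<close>
    by (intro mult_right_mono mult_left_mono) auto
  finally have head: "\<bar>(\<Sum>n<D. c n * F (D div \<nu> n)) - \<alpha> * (\<Sum>n<D. a n) * real D ^ 4\<bar> \<le> (K + 4 * \<alpha>) * (\<Sum>n. b n) * real D ^ 3" .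
  have "\<bar>\<Sum>n. a (n + D)\<bar> * real D \<le> (\<Sum>n. b (n + D))"
  proof (rule abs_suminf_tail_le[OF \<open>summable (\<lambda>n. \<bar>a n\<bar>)\<close> \<open>summable b\<close>])
    show "\<bar>a n\<bar> * real D \<le> b n" if "n \<ge> D" for n
      using that \<nu>[of n] by (intro a_le_b) simp
  qed
  also have "\<dots> \<le> (\<Sum>n. b n)"
    using suminf_split_initial_segment[OF \<open>summable b\<close>, of D] b_nonneg by (simp add: sum_nonneg)
  finally have "\<alpha> * real D ^ 3 * (\<bar>\<Sum>n. a (n + D)\<bar> * real D) \<le> \<alpha> * real D ^ 3 * (\<Sum>n. b n)"
    using \<open>\<alpha> \<ge> 0\<close> by (intro mult_left_mono) auto
  then have tail: "\<bar>\<alpha> * (\<Sum>n. a (n + D)) * real D ^ 4\<bar> \<le> \<alpha> * (\<Sum>n. b n) * real D ^ 3"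
    using \<open>\<alpha> \<ge> 0\<close> by (simp add: abs_mult eval_nat_numeral ac_simps)
  have "(\<Sum>n. a n) = (\<Sum>n<D. a n) + (\<Sum>n. a (n + D))"
    using suminf_split_initial_segment[OF \<open>summable a\<close>, of D] by simp
  then show ?thesis
    using head tail unfolding a_def[symmetric] b_def[symmetric] by (simp add: algebra_simps abs_le_iff)
qed

lemma quartic_asymp_weighted_sum:
  fixes c :: "nat \<Rightarrow> real" and \<nu> :: "nat \<Rightarrow> nat"
  assumes "quartic_asymp F \<alpha>" and "\<alpha> \<ge> 0"
    and "\<And>n. \<nu> n > n"
    and summable: "summable (\<lambda>n. \<bar>c n\<bar> / real (\<nu> n) ^ 3)"
  shows "quartic_asymp (\<lambda>D. \<Sum>n<D. c n * F (D div \<nu> n)) (\<alpha> * (\<Sum>n. c n / real (\<nu> n) ^ 4))"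
proof -
  obtain K where "K \<ge> 0" and K: "\<And>m. \<bar>F m - \<alpha> * real m ^ 4\<bar> \<le> K * real m ^ 3"
    using assms(1) unfolding quartic_asymp_def by blast
  moreover have "(K + 5 * \<alpha>) * (\<Sum>n. \<bar>c n\<bar> / real (\<nu> n) ^ 3) \<ge> 0"
    using \<open>K \<ge> 0\<close> \<open>\<alpha> \<ge> 0\<close> by (simp add: suminf_nonneg[OF summable])
  ultimately show ?thesis
    unfolding quartic_asymp_def using weighted_sum_quartic_error[OF K \<open>\<alpha> \<ge> 0\<close> \<open>K \<ge> 0\<close> assms(3) summable]
    by (intro exI[of _ "(K + 5 * \<alpha>) * (\<Sum>n. \<bar>c n\<bar> / real (\<nu> n) ^ 3)"]) (auto simp: mult.assoc)
qed

section \<open>The value of \<open>\<zeta>(4)\<close>\<close>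

definition sin_partial_product :: "real \<Rightarrow> nat \<Rightarrow> real" where
  "sin_partial_product x n = (\<Prod>k=1..n. 1 - x^2 / of_nat k^2)"

(* A recursive definition rather than (sin_partial_product x n - 1) / x^2, which would be junk at
   x = 0: this way the coefficient is visibly a polynomial in x, hence continuous at 0. *)

primrec sin_partial_product_coeff :: "nat \<Rightarrow> real \<Rightarrow> real" where
  "sin_partial_product_coeff 0 x = 0"
| "sin_partial_product_coeff (Suc n) x =
     sin_partial_product_coeff n x * (1 - x^2 / of_nat (Suc n)^2) - 1 / of_nat (Suc n)^2"

lemma sin_partial_product_eq: "sin_partial_product x n = 1 + x^2 * sin_partial_product_coeff n x"
proof (induction n)
  case (Suc n)
  have "sin_partial_product x (Suc n) = sin_partial_product x n * (1 - x^2 / of_nat (Suc n)^2)"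
    unfolding sin_partial_product_def by (simp add: prod.nat_ivl_Suc')
  then show ?case using Suc by (simp add: algebra_simps add_divide_distrib)
qed (simp add: sin_partial_product_def)

lemma sin_partial_product_coeff_0: "sin_partial_product_coeff n 0 = - (\<Sum>k<n. 1 / of_nat (Suc k)^2)"
  by (induction n) simp_all

lemma abs_sin_partial_product_coeff_le:
  assumes "\<bar>x\<bar> \<le> 1"
  shows "\<bar>sin_partial_product_coeff n x\<bar> \<le> pi^2 / 6"
proof -
  have "\<bar>sin_partial_product_coeff n x\<bar> \<le> (\<Sum>k<n. 1 / of_nat (Suc k)^2)"
  proof (induction n)
    case (Suc n)
    have "x^2 \<le> 1" using assms by (simp add: abs_square_le_1)
    also have "1 \<le> (of_nat (Suc n) :: real)^2" by simp
    finally have factor: "0 \<le> 1 - x^2 / of_nat (Suc n)^2" "1 - x^2 / of_nat (Suc n)^2 \<le> 1"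
      by (simp_all add: field_simps)
    have "\<bar>sin_partial_product_coeff (Suc n) x\<bar>
        \<le> \<bar>sin_partial_product_coeff n x\<bar> * \<bar>1 - x^2 / of_nat (Suc n)^2\<bar> + 1 / of_nat (Suc n)^2"
      by (simp add: abs_mult[symmetric] order_trans[OF abs_triangle_ineq4])
    also have "\<dots> \<le> \<bar>sin_partial_product_coeff n x\<bar> + 1 / of_nat (Suc n)^2"
      using factor by (intro add_mono mult_left_le) auto
    finally show ?case using Suc by simp
  qed simp
  also have "\<dots> \<le> pi^2 / 6"
    using sum_le_suminf[OF sums_summable[OF inverse_squares_sums], of "{..<n}"] sums_unique[OF inverse_squares_sums]
    by simp
  finally show ?thesis .
qed

lemma norm_sin_partial_product_coeff_div_le:
  assumes "\<bar>x\<bar> \<le> 1"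
  shows "norm (sin_partial_product_coeff n x / of_nat (Suc n)^2) \<le> (pi^2 / 6) / of_nat (Suc n)^2"
proof -
  have "\<bar>sin_partial_product_coeff n x\<bar> / of_nat (Suc n)^2 \<le> (pi^2 / 6) / of_nat (Suc n)^2"
    using abs_sin_partial_product_coeff_le[OF assms] by (rule divide_right_mono) simp
  then show ?thesis by (simp only: real_norm_def abs_divide) simp
qed

lemma sin_partial_product_coeff_sums:
  assumes x: "x \<noteq> 0"
  shows "(\<lambda>n. sin_partial_product_coeff n x / of_nat (Suc n)^2)
           sums (((1 - sin (pi * x) / (pi * x)) / x^2 - pi^2 / 6) / x^2)"
proof -
  have "(\<lambda>n. sin_partial_product x n - sin_partial_product x (Suc n)) sums (sin_partial_product x 0 - sin (pi * x) / (pi * x))"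
    unfolding sin_partial_product_def using x by (intro telescope_sums' sin_product_formula_real')
  also have "(\<lambda>n. sin_partial_product x n - sin_partial_product x (Suc n))
      = (\<lambda>n. x^2 * (1 / of_nat (Suc n)^2 + x^2 * (sin_partial_product_coeff n x / of_nat (Suc n)^2)))"
    unfolding sin_partial_product_eq by (simp add: algebra_simps add_divide_distrib power2_eq_square)
  finally have telescope: "(\<lambda>n. x^2 * (1 / of_nat (Suc n)^2 + x^2 * (sin_partial_product_coeff n x / of_nat (Suc n)^2)))
      sums (sin_partial_product x 0 - sin (pi * x) / (pi * x))" .
  have "(\<lambda>n. 1 / of_nat (Suc n)^2 + x^2 * (sin_partial_product_coeff n x / of_nat (Suc n)^2))
      sums ((1 - sin (pi * x) / (pi * x)) / x^2)"
    using sums_divide[OF telescope, of "x^2"] x by (simp add: sin_partial_product_def)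
  from sums_diff[OF this inverse_squares_sums] have
    "(\<lambda>n. x^2 * (sin_partial_product_coeff n x / of_nat (Suc n)^2)) sums ((1 - sin (pi * x) / (pi * x)) / x^2 - pi^2 / 6)"
    by simp
  from sums_divide[OF this, of "x^2"] x show ?thesis by simp
qed

lemma sin_partial_product_coeff_powser_sums:
  assumes x: "x \<noteq> 0"
  shows "(\<lambda>n. - sin_coeff (n + 5) * pi ^ (n + 4) * x ^ n)
           sums (((1 - sin (pi * x) / (pi * x)) / x^2 - pi^2 / 6) / x^2)"
proof -
  define z where "z = pi * x"
  have "(\<Sum>i<5. sin_coeff i * z ^ i) = z - z ^ 3 / 6"
    by (simp add: lessThan_nat_numeral sin_coeff_def fact_numeral)
  with sums_split_initial_segment[OF sin_converges[of z], of 5]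
  have "(\<lambda>n. sin_coeff (n + 5) * z ^ (n + 5)) sums (sin z - (z - z ^ 3 / 6))"
    by simp
  from sums_divide[OF sums_minus[OF this], of "pi * x ^ 5"]
  have "(\<lambda>n. - (sin_coeff (n + 5) * z ^ (n + 5)) / (pi * x ^ 5)) sums (- (sin z - (z - z ^ 3 / 6)) / (pi * x ^ 5))" .
  moreover have "- (sin_coeff (n + 5) * z ^ (n + 5)) / (pi * x ^ 5) = - sin_coeff (n + 5) * pi ^ (n + 4) * x ^ n" for n
    unfolding z_def using x by (simp add: power_add field_simps eval_nat_numeral)
  moreover have "- (sin z - (z - z ^ 3 / 6)) / (pi * x ^ 5) = ((1 - sin (pi * x) / (pi * x)) / x^2 - pi^2 / 6) / x^2"
    unfolding z_def using x by (simp add: field_simps eval_nat_numeral)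
  ultimately show ?thesis by simp
qed

lemma continuous_on_sin_partial_product_coeff: "continuous_on A (sin_partial_product_coeff k)"
proof (induction k)
  case (Suc k)
  then have "continuous_on A (\<lambda>x. sin_partial_product_coeff k x * (1 - x^2 / of_nat (Suc k)^2) - 1 / of_nat (Suc k)^2)"
    by (intro continuous_intros) auto
  then show ?case by simp
qed simp

lemma continuous_on_sin_partial_product_coeff_suminf:
  "continuous_on (ball 0 1) (\<lambda>x. \<Sum>n. sin_partial_product_coeff n x / of_nat (Suc n)^2)"
proof (rule uniform_limit_theorem)
  show "uniform_limit (ball 0 1) (\<lambda>n x. \<Sum>k<n. sin_partial_product_coeff k x / of_nat (Suc k)^2)
      (\<lambda>x. \<Sum>n. sin_partial_product_coeff n x / of_nat (Suc n)^2) sequentially"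
  proof (rule Weierstrass_m_test)
    show "norm (sin_partial_product_coeff n x / of_nat (Suc n)^2) \<le> (pi^2 / 6) / of_nat (Suc n)^2"
      if "x \<in> ball 0 1" for n x
      using that by (intro norm_sin_partial_product_coeff_div_le) simp
    show "summable (\<lambda>n. (pi^2 / 6) / (of_nat (Suc n) :: real)^2)"
      using summable_mult[OF sums_summable[OF inverse_squares_sums], of "pi^2 / 6"] by simp
  qed
  show "\<forall>\<^sub>F n in sequentially. continuous_on (ball 0 1) (\<lambda>x. \<Sum>k<n. sin_partial_product_coeff k x / of_nat (Suc k)^2)"
  proof (intro always_eventually allI)
    show "continuous_on (ball 0 1) (\<lambda>x. \<Sum>k<n. sin_partial_product_coeff k x / of_nat (Suc k)^2)" for n
      by (intro continuous_intros continuous_on_sin_partial_product_coeff) auto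
  qed
qed simp

lemma suminf_sin_partial_product_coeff_0:
  "(\<Sum>n. sin_partial_product_coeff n 0 / of_nat (Suc n)^2) = - (pi^4 / 120)"
proof -
  define U where "U x = (\<Sum>n. sin_partial_product_coeff n x / of_nat (Suc n)^2)" for x
  define c where "c n = - sin_coeff (n + 5) * pi ^ (n + 4)" for n
  define f where "f x = (\<Sum>n. c n * x ^ n)" for x
  \<comment> \<open>\<open>U\<close> is continuous at 0 and agrees off 0 with the power series \<open>f\<close>, whose constant term is \<open>-pi^4/120\<close>.\<close>
  have "isCont U 0"
    using continuous_on_sin_partial_product_coeff_suminf unfolding U_def
    by (subst (asm) continuous_on_eq_continuous_at) simp_all
  then have "U \<midarrow>0\<rightarrow> U 0" by (simp add: isCont_def)
  moreover have "U \<midarrow>0\<rightarrow> - (pi^4 / 120)"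
  proof (rule Lim_transform_eventually)
    have "summable (\<lambda>n. c n * y ^ n)" for y
    proof (cases "y = 0")
      case True
      then show ?thesis by (simp only: summable_0_powser)
    next
      case False
      then show ?thesis
        unfolding c_def by (rule sums_summable[OF sin_partial_product_coeff_powser_sums])
    qed
    then have "isCont f 0" unfolding f_def by (rule isCont_powser_converges_everywhere)
    moreover have "f 0 = - (pi^4 / 120)"
      unfolding f_def powser_zero by (simp add: c_def sin_coeff_def fact_numeral)
    ultimately show "f \<midarrow>0\<rightarrow> - (pi^4 / 120)"
      by (simp add: isCont_def)
    have "eventually (\<lambda>x. x \<noteq> (0::real)) (at 0)"
      by (auto simp: eventually_at intro!: exI[of _ 1])
    then show "eventually (\<lambda>x. f x = U x) (at 0)"
    proof eventually_elim
      fix x :: real assume "x \<noteq> 0"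
      show "f x = U x"
        unfolding f_def U_def c_def
        using sums_unique[OF sin_partial_product_coeff_powser_sums[OF \<open>x \<noteq> 0\<close>]]
          sums_unique[OF sin_partial_product_coeff_sums[OF \<open>x \<noteq> 0\<close>]] by simp
    qed
  qed
  ultimately show ?thesis
    unfolding U_def by (rule LIM_unique)
qed

lemma sum_inverse_squares_pairs_sums:
  "(\<lambda>n. (\<Sum>k<n. 1 / of_nat (Suc k)^2) / of_nat (Suc n)^2) sums (pi^4 / 120)"
proof -
  have "summable (\<lambda>n. sin_partial_product_coeff n 0 / of_nat (Suc n)^2)"
  proof (rule summable_comparison_test'[where N = 0])
    show "summable (\<lambda>n. (pi^2 / 6) / (of_nat (Suc n) :: real)^2)"
      using summable_mult[OF sums_summable[OF inverse_squares_sums], of "pi^2 / 6"] by simp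
    show "norm (sin_partial_product_coeff n 0 / of_nat (Suc n)^2) \<le> (pi^2 / 6) / of_nat (Suc n)^2" for n
      by (rule norm_sin_partial_product_coeff_div_le) simp
  qed
  then have "(\<lambda>n. sin_partial_product_coeff n 0 / of_nat (Suc n)^2) sums (- (pi^4 / 120))"
    using suminf_sin_partial_product_coeff_0 by (simp add: summable_sums_iff)
  from sums_minus[OF this] show ?thesis
    by (simp add: sin_partial_product_coeff_0)
qed

lemma inverse_fourth_powers_sums: "(\<lambda>n. 1 / of_nat (Suc n) ^ 4) sums (pi^4 / 90)"
proof -
  define a where "a n = 1 / (of_nat (Suc n) :: real)^2" for n
  have square: "(\<Sum>n<N. a n)^2 = 2 * (\<Sum>n<N. (\<Sum>k<n. a k) * a n) + (\<Sum>n<N. a n ^ 2)" for N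
    by (induction N) (simp_all add: power2_eq_square algebra_simps sum_distrib_left)
  have "(\<lambda>N. (\<Sum>n<N. a n)^2 - 2 * (\<Sum>n<N. (\<Sum>k<n. a k) * a n)) \<longlonglongrightarrow> (pi^2 / 6)^2 - 2 * (pi^4 / 120)"
    using inverse_squares_sums sum_inverse_squares_pairs_sums unfolding sums_def a_def
    by (intro tendsto_intros) simp_all
  also have "(pi^2 / 6)^2 - 2 * (pi^4 / 120) = pi^4 / 90"
    by (simp add: power2_eq_square field_simps eval_nat_numeral)
  finally have "(\<lambda>n. a n ^ 2) sums (pi^4 / 90)"
    unfolding sums_def square by simp
  then show ?thesis
    unfolding a_def by (simp add: power_divide flip: power_mult)
qed

section \<open>Asymptotics of \<open>S\<close>\<close>

lemma sum_cubes_upto: "(\<Sum>t=1..m. real t ^ 3) = (real m * (real m + 1))^2 / 4"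
  by (induction m) (simp_all add: power2_eq_square power3_eq_cube field_simps)

lemma quartic_asymp_sum_cubes: "quartic_asymp (\<lambda>m. \<Sum>t=1..m. real t ^ 3) (1/4)"
  unfolding quartic_asymp_def
proof (intro exI[of _ 1] conjI allI)
  fix m
  have "real m ^ 2 \<le> real m ^ 3" "0 \<le> real m ^ 2"
    by (cases m) (auto simp: power2_eq_square power3_eq_cube)
  moreover have "(\<Sum>t=1..m. real t ^ 3) - 1/4 * real m ^ 4 = real m ^ 3 / 2 + real m ^ 2 / 4"
    unfolding sum_cubes_upto by (simp add: power2_eq_square power3_eq_cube power4_eq_xxxx field_simps)
  ultimately show "\<bar>(\<Sum>t=1..m. real t ^ 3) - 1/4 * real m ^ 4\<bar> \<le> 1 * real m ^ 3"
    unfolding abs_le_iff by (intro conjI) linarith+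
qed simp

lemma floor_sum_cube_eq: "floor_sum (\<lambda>e. real e ^ 3) D = (\<Sum>n<D. \<Sum>t=1..D div Suc n. real t ^ 3)"
proof -
  have le: "x \<le> D" if "1 \<le> e" "x * e \<le> D" for x e :: nat
    using that mult_le_mono2[OF that(1), of x] by linarith
  have "floor_sum (\<lambda>e. real e ^ 3) D = (\<Sum>e\<in>{1..D}. \<Sum>w | w \<in> {1..D} \<and> e * w \<le> D. real e ^ 3)"
    unfolding floor_sum_def
  proof (rule sum.cong[OF refl])
    fix e assume "e \<in> {1..D}"
    then have "{w. w \<in> {1..D} \<and> e * w \<le> D} = {1..D div e}"
      using le[of e] by (auto simp: less_eq_div_iff_mult_less_eq mult.commute)
    then show "real e ^ 3 * real (D div e) = (\<Sum>w | w \<in> {1..D} \<and> e * w \<le> D. real e ^ 3)"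
      by simp
  qed
  also have "\<dots> = (\<Sum>w\<in>{1..D}. \<Sum>e | e \<in> {1..D} \<and> e * w \<le> D. real e ^ 3)"
    by (rule sum.swap_restrict) simp_all
  also have "\<dots> = (\<Sum>w\<in>{1..D}. \<Sum>t=1..D div w. real t ^ 3)"
  proof (rule sum.cong[OF refl])
    fix w assume "w \<in> {1..D}"
    then have "{e. e \<in> {1..D} \<and> e * w \<le> D} = {1..D div w}"
      using le[of w] by (auto simp: less_eq_div_iff_mult_less_eq)
    then show "(\<Sum>e | e \<in> {1..D} \<and> e * w \<le> D. real e ^ 3) = (\<Sum>t=1..D div w. real t ^ 3)"
      by simp
  qed
  also have "\<dots> = (\<Sum>n<D. \<Sum>t=1..D div Suc n. real t ^ 3)"
    by (rule sum.reindex_bij_witness[where i = Suc and j = "\<lambda>w. w - 1"]) auto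
  finally show ?thesis .
qed

lemma quartic_asymp_floor_sum_cube: "quartic_asymp (floor_sum (\<lambda>e. real e ^ 3)) (pi^4 / 360)"
proof -
  have "summable (\<lambda>n. 1 / real (Suc n) ^ 2)"
    using sums_summable[OF inverse_squares_sums] by simp
  then have "summable (\<lambda>n. \<bar>1\<bar> / real (Suc n) ^ 3 :: real)"
  proof (rule summable_comparison_test'[where N = 0])
    show "norm (\<bar>1\<bar> / real (Suc n) ^ 3) \<le> 1 / real (Suc n) ^ 2" for n :: nat
      by simp (intro frac_le power_increasing; simp)
  qed
  from quartic_asymp_weighted_sum[OF quartic_asymp_sum_cubes _ _ this]
  have "quartic_asymp (\<lambda>D. \<Sum>n<D. \<Sum>t=1..D div Suc n. real t ^ 3) (1/4 * (\<Sum>n. 1 / real (Suc n) ^ 4))"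
    by simp
  also have "(\<Sum>n. 1 / real (Suc n) ^ 4) = pi^4 / 90"
    using sums_unique[OF inverse_fourth_powers_sums] by simp
  finally show ?thesis
    unfolding floor_sum_cube_eq[abs_def] by simp
qed

lemma inverse_one_minus_inverse_cube_diff:
  fixes x :: real
  assumes "x > 1"
  shows "1 / (1 - 1 / x^3) - 1 / x * (1 / (1 - 1 / x^3)) = x ^ 2 / (x ^ 2 + x + 1)"
proof -
  define d where "d = x ^ 2 + x + 1"
  have "x - 1 \<noteq> 0" "x \<noteq> 0" "d \<noteq> 0"
    unfolding d_def using assms zero_le_power2[of x] by linarith+
  have eq: "1 - 1 / x^3 = (x - 1) * d / x ^ 3"
    unfolding d_def using \<open>x \<noteq> 0\<close> by (simp add: field_simps eval_nat_numeral)
  have gen: "A - 1 / x * A = (x - 1) / x * A" for A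
    using \<open>x \<noteq> 0\<close> by (simp add: field_simps)
  have "1 / (1 - 1 / x^3) - 1 / x * (1 / (1 - 1 / x^3)) = (x - 1) / x * (x ^ 3 / ((x - 1) * d))"
    unfolding gen eq by simp
  also have "\<dots> = x ^ 2 / d"
    using \<open>x - 1 \<noteq> 0\<close> \<open>x \<noteq> 0\<close> \<open>d \<noteq> 0\<close> by (simp add: divide_simps eval_nat_numeral)
  finally show ?thesis unfolding d_def .
qed

lemma quartic_asymp_padic_transform:
  assumes p: "p > 1" and F: "quartic_asymp F \<alpha>" and "\<alpha> \<ge> 0"
  shows "quartic_asymp (padic_transform p F) (\<alpha> * (real p ^ 2 / (real p ^ 2 + real p + 1)))"
proof -
  define x where "x = real p"
  have "x > 1" unfolding x_def using p by simp
  have geom2: "norm (1 / x^2) < 1" and geom3: "norm (1 / x^3) < 1"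
    using \<open>x > 1\<close> by simp_all
  have \<nu>1: "p ^ a > a" for a
    using p by (simp add: power_gt_expt)
  then have \<nu>2: "p ^ Suc a > a" for a
    using Suc_lessD by blast
  have "(x ^ a) ^ 3 = x ^ a * (x ^ 2) ^ a" "(x ^ a) ^ 4 = x ^ a * (x ^ 3) ^ a"
    "(x ^ Suc a) ^ 3 = x ^ 3 * (x ^ a * (x ^ 2) ^ a)" "(x ^ Suc a) ^ 4 = x ^ 3 * x * (x ^ a * (x ^ 3) ^ a)" for a
    by (simp_all add: power2_eq_square power3_eq_cube power4_eq_xxxx power_mult_distrib)
  then have "x ^ a / (x ^ a) ^ 3 = (1 / x^2) ^ a" "x ^ a / (x ^ a) ^ 4 = (1 / x^3) ^ a"
    "x ^ 3 * x ^ a / (x ^ Suc a) ^ 3 = (1 / x^2) ^ a" "x ^ 3 * x ^ a / (x ^ Suc a) ^ 4 = 1 / x * (1 / x^3) ^ a" for a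
    using \<open>x > 1\<close> by (simp_all add: power_divide)
  then have summable1: "summable (\<lambda>a. \<bar>x ^ a\<bar> / real (p ^ a) ^ 3)"
    and summable2: "summable (\<lambda>a. \<bar>x ^ 3 * x ^ a\<bar> / real (p ^ Suc a) ^ 3)"
    and sum1: "(\<Sum>a. x ^ a / real (p ^ a) ^ 4) = 1 / (1 - 1 / x^3)"
    and sum2: "(\<Sum>a. x ^ 3 * x ^ a / real (p ^ Suc a) ^ 4) = 1 / x * (1 / (1 - 1 / x^3))"
    using \<open>x > 1\<close> summable_geometric[OF geom2] suminf_geometric[OF geom3]
      suminf_mult[OF summable_geometric[OF geom3], of "1 / x"]
    unfolding x_def by (simp_all add: abs_mult)
  have "quartic_asymp (\<lambda>D. (\<Sum>a<D. x ^ a * F (D div p ^ a)) - (\<Sum>a<D. x ^ 3 * x ^ a * F (D div p ^ Suc a)))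
      (\<alpha> * (1 / (1 - 1 / x^3)) - \<alpha> * (1 / x * (1 / (1 - 1 / x^3))))"
    using quartic_asymp_weighted_sum[OF F \<open>\<alpha> \<ge> 0\<close> \<nu>1 summable1]
      quartic_asymp_weighted_sum[OF F \<open>\<alpha> \<ge> 0\<close> \<nu>2 summable2]
    unfolding sum1 sum2 by (rule quartic_asymp_diff)
  moreover have "padic_transform p F = (\<lambda>D. (\<Sum>a<D. x ^ a * F (D div p ^ a)) - (\<Sum>a<D. x ^ 3 * x ^ a * F (D div p ^ Suc a)))"
    unfolding padic_transform_def x_def by (simp add: fun_eq_iff sum_subtractf algebra_simps)
  moreover have "\<alpha> * (x ^ 2 / (x ^ 2 + x + 1)) = \<alpha> * (1 / (1 - 1 / x^3)) - \<alpha> * (1 / x * (1 / (1 - 1 / x^3)))"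
    unfolding inverse_one_minus_inverse_cube_diff[OF \<open>x > 1\<close>, symmetric] by (rule right_diff_distrib)
  ultimately show ?thesis
    unfolding x_def by (simp only:)
qed

lemma one_minus_quadratic_ratio:
  fixes x :: real
  assumes "x \<ge> 0"
  shows "1 - x ^ 2 / (x ^ 2 + x + 1) = (x + 1) / (x ^ 2 + x + 1)"
proof -
  have "x ^ 2 + x + 1 > 0" using assms zero_le_power2[of x] by linarith
  then show ?thesis by (simp add: field_simps)
qed

lemma quartic_asymp_S_one: "quartic_asymp (\<lambda>D. real_of_int (S 1 D)) (pi^4 / 360)"
  unfolding S_one_eq by (rule quartic_asymp_floor_sum_cube)

lemma quartic_asymp_S_prime:
  assumes p: "prime p"
  shows "quartic_asymp (\<lambda>D. real_of_int (S p D)) (pi^4 / 360 * ((real p + 1) / (real p ^ 2 + real p + 1)))"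
proof -
  have "quartic_asymp (\<lambda>D. floor_sum (\<lambda>e. real e ^ 3) D - padic_transform p (floor_sum (\<lambda>e. real e ^ 3)) D)
      (pi^4 / 360 - pi^4 / 360 * (real p ^ 2 / (real p ^ 2 + real p + 1)))"
    using prime_gt_1_nat[OF p]
    by (intro quartic_asymp_diff quartic_asymp_padic_transform quartic_asymp_floor_sum_cube) auto
  moreover have "pi^4 / 360 - pi^4 / 360 * (real p ^ 2 / (real p ^ 2 + real p + 1))
      = pi^4 / 360 * ((real p + 1) / (real p ^ 2 + real p + 1))"
    unfolding one_minus_quadratic_ratio[OF of_nat_0_le_iff, symmetric] by (simp add: right_diff_distrib)
  ultimately show ?thesis
    unfolding S_prime_eq[OF p] by simp
qed

lemma quartic_asymp_S_prime_mult:
  assumes p: "prime p" and q: "prime q" and "p \<noteq> q"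
  shows "quartic_asymp (\<lambda>D. real_of_int (S (p * q) D))
    (pi^4 / 360 * ((real p + 1) / (real p ^ 2 + real p + 1)) * ((real q + 1) / (real q ^ 2 + real q + 1)))"
proof -
  define \<alpha> where "\<alpha> = pi^4 / 360"
  define \<beta> where "\<beta> r = real r ^ 2 / (real r ^ 2 + real r + 1)" for r
  have cube: "quartic_asymp (floor_sum (\<lambda>e. real e ^ 3)) \<alpha>" and "\<alpha> \<ge> 0"
    unfolding \<alpha>_def by (simp_all add: quartic_asymp_floor_sum_cube)
  have p1: "p > 1" and q1: "q > 1"
    using prime_gt_1_nat[OF p] prime_gt_1_nat[OF q] by simp_all
  have "\<alpha> * \<beta> q \<ge> 0" unfolding \<beta>_def using \<open>\<alpha> \<ge> 0\<close> by simp
  have "quartic_asymp (\<lambda>D. floor_sum (\<lambda>e. real e ^ 3) D - padic_transform p (floor_sum (\<lambda>e. real e ^ 3)) D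
      - padic_transform q (floor_sum (\<lambda>e. real e ^ 3)) D + padic_transform p (padic_transform q (floor_sum (\<lambda>e. real e ^ 3))) D)
      (\<alpha> - \<alpha> * \<beta> p - \<alpha> * \<beta> q + \<alpha> * \<beta> q * \<beta> p)"
    unfolding \<beta>_def using cube \<open>\<alpha> \<ge> 0\<close> \<open>\<alpha> * \<beta> q \<ge> 0\<close>[unfolded \<beta>_def] p1 q1
    by (intro quartic_asymp_add quartic_asymp_diff quartic_asymp_padic_transform)
  moreover have "\<alpha> - \<alpha> * \<beta> p - \<alpha> * \<beta> q + \<alpha> * \<beta> q * \<beta> p = \<alpha> * (1 - \<beta> p) * (1 - \<beta> q)"
    by (simp add: algebra_simps)
  ultimately show ?thesis
    unfolding S_prime_mult_eq[OF assms] \<alpha>_def \<beta>_def one_minus_quadratic_ratio[OF of_nat_0_le_iff] by simp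
qed

theorem proposition5p2:
  fixes p q :: nat
  assumes "prime p" and "prime q" and "p \<noteq> q"
  shows "((\<lambda>D. real_of_int (S 1 D) - pi^4 * real D ^ 4 / (2^3 * 3^2 * 5))
           \<in> O(\<lambda>D. real D ^ 3)) \<and>
         ((\<lambda>D. real_of_int (S p D) - pi^4 * real D ^ 4 / (2^3 * 3^2 * 5)
                 * ((real p + 1) / (real p ^ 2 + real p + 1)))
           \<in> O(\<lambda>D. real D ^ 3)) \<and>
         ((\<lambda>D. real_of_int (S (p * q) D) - pi^4 * real D ^ 4 / (2^3 * 3^2 * 5)
                 * ((real p + 1) / (real p ^ 2 + real p + 1))
                 * ((real q + 1) / (real q ^ 2 + real q + 1)))
           \<in> O(\<lambda>D. real D ^ 3))"
  using quartic_asymp_imp_bigo[OF quartic_asymp_S_one]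
    quartic_asymp_imp_bigo[OF quartic_asymp_S_prime[OF assms(1)]]
    quartic_asymp_imp_bigo[OF quartic_asymp_S_prime_mult[OF assms]]
  by (simp add: ac_simps)

end
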